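(* Let $H=(V,E)$ be a $k$-uniform hypergraph and $U\subseteq V$ such that every edge of the projected hypergraph $H[U]$ has size at most two. Then, over the polynomial ring over $\mathrm{GF}(2^m)$ (any $m\geq1$) in the variables $s$ and $\{v_e\}_{e\in E}$, $$\det(\mathbf{T}^{(s)}(H,U))=\sum_{M\in\mathcal{M}}s^{\Lambda(M)}\prod_{e\in M}v_e^{p(e)},$$ where $\mathcal{M}$ is the set of all perfect matchings of $H[U]$, $\Lambda(M)$ is the number of loops in $M$, and $p(e)=1$ if $e$ is a loop and $p(e)=2$ otherwise.
   Context: A hypergraph $H=(V,E)$ has a finite vertex set $V$ and a multiset $E$ of subsets of $V$; $k$-uniform means all edges have size $k$. For $U\subseteq V$, the projected hypergraph $H[U]$ has one edge $e\cap U$ for each $e\in E$. An edge $e$ is a loop (at $i$) if $e\cap U=\{i\}$. Each $e\in E$ has a variable $v_e$. The Tutte matrix of index $s$, $\mathbf{T}^{(s)}(H,U)$, is the $|U|\times|U|$ matrix with rows and columns indexed by $U$, with $\mathbf{T}_{i,j}=\sum v_e$ over all $e\in E$ with $e\cap U=\{i,j\}$ for $i\neq j$, and $\mathbf{T}_{i,i}=s\sum v_e$ over all $e\in E$ with $e\cap U=\{i\}$. A perfect matching of $H[U]$ is a set $M\subseteq E$ of edges (multiset occurrences distinct) with nonempty projections on $U$ that are pairwise disjoint and cover $U$; a loop covers its single vertex. *)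

theory Defs
  imports "HOL-Library.Poly_Mapping" "HOL-Combinatorics.Permutations"
begin

text \<open>Hypergraph: finite vertex set V, finite index set E of edge occurrences
  (so that E may be a multiset), and edge :: 'e \<Rightarrow> 'v set giving each edge.\<close>

definition k_uniform :: "nat \<Rightarrow> 'v set \<Rightarrow> 'e set \<Rightarrow> ('e \<Rightarrow> 'v set) \<Rightarrow> bool" where
  "k_uniform k V E edge \<longleftrightarrow> finite V \<and> finite E \<and> (\<forall>e\<in>E. edge e \<subseteq> V \<and> card (edge e) = k)"

datatype 'e tvar = SVar | EVar 'e

type_synonym ('x, 'k) mpoly = "('x \<Rightarrow>\<^sub>0 nat) \<Rightarrow>\<^sub>0 'k"

definition pvar :: "'x \<Rightarrow> ('x, 'k::{zero,one}) mpoly" where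
  "pvar x = Poly_Mapping.single (Poly_Mapping.single x 1) 1"

definition is_loop :: "'v set \<Rightarrow> ('e \<Rightarrow> 'v set) \<Rightarrow> 'e \<Rightarrow> bool" where
  "is_loop U edge e \<longleftrightarrow> card (edge e \<inter> U) = 1"

definition tutte :: "'v set \<Rightarrow> 'e set \<Rightarrow> ('e \<Rightarrow> 'v set) \<Rightarrow> 'a::comm_ring_1 \<Rightarrow> ('e \<Rightarrow> 'a)
    \<Rightarrow> 'v \<Rightarrow> 'v \<Rightarrow> 'a" where
  "tutte U E edge s v i j =
     (if i = j then s * (\<Sum>e\<in>{e\<in>E. edge e \<inter> U = {i}}. v e)
      else (\<Sum>e\<in>{e\<in>E. edge e \<inter> U = {i, j}}. v e))"

definition det_on :: "'i set \<Rightarrow> ('i \<Rightarrow> 'i \<Rightarrow> 'a::comm_ring_1) \<Rightarrow> 'a" where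
  "det_on I A = (\<Sum>p\<in>{p. p permutes I}. of_int (sign p) * (\<Prod>i\<in>I. A i (p i)))"

definition perfect_matching :: "'v set \<Rightarrow> 'e set \<Rightarrow> ('e \<Rightarrow> 'v set) \<Rightarrow> 'e set \<Rightarrow> bool" where
  "perfect_matching U E edge M \<longleftrightarrow>
     M \<subseteq> E \<and> (\<forall>e\<in>M. edge e \<inter> U \<noteq> {}) \<and>
     (\<forall>e\<in>M. \<forall>f\<in>M. e \<noteq> f \<longrightarrow> edge e \<inter> edge f \<inter> U = {}) \<and>
     (\<Union>e\<in>M. edge e \<inter> U) = U"

end

theory Submission
  imports Defs "HOL-Library.Disjoint_Sets" "HOL-Library.Z2"
begin

(*
  In characteristic 2 the determinant is the permanent. Expanding every Tutte entry as a sum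
  over edges turns the permanent into a sum over pairs (p, phi): a permutation p of U and, for
  each i, an edge phi i whose projection is {i, p i}. Reversing all cycles,
  (p, phi) |-> (inv p, phi o inv p), is a weight-preserving involution, so in characteristic 2
  only its fixed points survive. These are the pairs with phi (p i) = phi i: then p is an
  involution and the projections phi i are exactly its orbits. As projections have at most two
  vertices, such pairs correspond bijectively to perfect matchings, and a non-loop edge of the
  matching is chosen by both of its endpoints, whence the factor v_e^2.
*)

lemma even_card_if_fixpoint_free_involution:
  assumes "\<And>x. x \<in> S \<Longrightarrow> g x \<in> S" "\<And>x. x \<in> S \<Longrightarrow> g (g x) = x"
    and "\<And>x. x \<in> S \<Longrightarrow> g x \<noteq> x"
  shows "even (card S)"
proof -
  have "(\<Sum>x\<in>S. 1::bit) = 0" by (rule sum_involution_eq_0[where h = g]) (use assms in auto)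
  then have "of_nat (card S) = (0::bit)" by simp
  then show ?thesis by (metis even_of_nat even_zero)
qed

lemma one_add_one_eq_zero_if_card_eq_power_of_two:
  assumes "card (UNIV :: 'k::{field,finite} set) = 2 ^ m" and "m \<ge> 1"
  shows "(1::'k) + 1 = 0"
proof (rule ccontr)
  assume two: "(1::'k) + 1 \<noteq> 0"
  have "- x \<noteq> x" if "x \<noteq> 0" for x :: 'k
  proof
    assume "- x = x"
    then have "(1 + 1) * x = 0" by (simp add: distrib_right)
    with two that show False by simp
  qed
  then have "even (card (UNIV - {0::'k}))"
    by (intro even_card_if_fixpoint_free_involution[where g = uminus]) auto
  moreover have "even (card (UNIV :: 'k set))" and "card (UNIV :: 'k set) \<ge> 1"
    using assms by (simp_all add: Suc_le_eq)
  ultimately show False by (simp add: card_Diff_singleton)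
qed

lemma poly_mapping_one_add_one_eq_zero:
  assumes "(1::'k::semiring_1) + 1 = 0"
  shows "(1::'m::monoid_add \<Rightarrow>\<^sub>0 'k) + 1 = 0"
  by (metis assms single_add single_one single_zero)

lemma det_on_eq_permanent_if_one_add_one_eq_zero:
  fixes A :: "'i \<Rightarrow> 'i \<Rightarrow> 'a::comm_ring_1"
  assumes "(1::'a) + 1 = 0"
  shows "det_on I A = (\<Sum>p\<in>{p. p permutes I}. \<Prod>i\<in>I. A i (p i))"
proof -
  have "(-1::'a) = 1" using assms by (metis add.inverse_unique)
  then have "of_int (sign p) = (1::'a)" for p :: "'i \<Rightarrow> 'i" by (simp add: sign_def)
  then show ?thesis unfolding det_on_def by simp
qed

lemma sum_eq_sum_fixed_points_of_involution:
  fixes f :: "'b \<Rightarrow> 'a::comm_ring_1"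
  assumes "(1::'a) + 1 = 0" and "finite S"
    and "\<And>x. x \<in> S \<Longrightarrow> g x \<in> S" "\<And>x. x \<in> S \<Longrightarrow> g (g x) = x" "\<And>x. x \<in> S \<Longrightarrow> f (g x) = f x"
  shows "sum f S = sum f {x\<in>S. g x = x}"
proof -
  have "sum f (S - {x\<in>S. g x = x}) = 0"
  proof (rule sum_involution_eq_0)
    fix x assume "x \<in> S - {x\<in>S. g x = x}"
    moreover have "f x + f x = 0" by (metis assms(1) distrib_left mult.right_neutral mult_zero_right)
    ultimately show "f (g x) + f x = 0" "g x \<in> S - {x\<in>S. g x = x}" "g (g x) = x" "g x \<noteq> x"
      using assms(3-5) by auto
  qed
  then show ?thesis using assms(2) by (simp add: sum.subset_diff[of "{x\<in>S. g x = x}" S])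
qed

lemma prod_if_eq_power_card_mult_prod:
  fixes s :: "'a::comm_semiring_1"
  assumes "finite M"
  shows "(\<Prod>e\<in>M. if P e then s * v e else v e ^ 2) =
    s ^ card {e\<in>M. P e} * (\<Prod>e\<in>M. v e ^ (if P e then 1 else 2))"
proof -
  have "(\<Prod>e\<in>M. if P e then s * v e else v e ^ 2) =
      (\<Prod>e\<in>M. if P e then s else 1) * (\<Prod>e\<in>M. v e ^ (if P e then 1 else 2))"
    by (simp add: prod.distrib[symmetric] if_distrib if_distribR cong: if_cong)
  also have "(\<Prod>e\<in>M. if P e then s else 1) = s ^ card {e\<in>M. P e}"
    by (simp add: prod.inter_filter[symmetric, OF assms])
  finally show ?thesis .
qed

lemma permutes_inv_eq_self:
  assumes "p permutes S" and "\<And>i. i \<in> S \<Longrightarrow> p (p i) = i"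
  shows "inv p = p"
proof (rule inv_equality)
  show "p (p i) = i" for i using assms by (cases "i \<in> S") (simp_all add: permutes_not_in)
  then show "p (p i) = i" for i .
qed

lemma card_le_2_imp_doubleton:
  assumes "finite A" and "card A \<le> 2" and "i \<in> A"
  shows "\<exists>j. A = {i, j}"
proof (cases "A - {i} = {}")
  case True
  then show ?thesis using assms(3) by blast
next
  case False
  then obtain j where j: "j \<in> A - {i}" by blast
  have "card (A - {i}) \<le> Suc 0" using assms by (simp add: card_Diff_singleton)
  then have "A - {i} = {j}" using j assms(1) by (auto simp: card_le_Suc0_iff_eq)
  then show ?thesis using assms(3) by blast
qed

lemma perfect_matching_unique_edge:
  assumes "perfect_matching U E edge M" and "i \<in> U"
  shows "\<exists>!e. e \<in> M \<and> i \<in> edge e"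
  using assms unfolding perfect_matching_def by blast

locale finite_projection =
  fixes U :: "'v set" and E :: "'e set" and edge :: "'e \<Rightarrow> 'v set"
  assumes finite_U: "finite U" and finite_E: "finite E"
begin

definition edges_between :: "'v \<Rightarrow> 'v \<Rightarrow> 'e set" where
  "edges_between i j = {e\<in>E. edge e \<inter> U = {i, j}}"

definition weight :: "'a::comm_ring_1 \<Rightarrow> ('e \<Rightarrow> 'a) \<Rightarrow> 'e \<Rightarrow> 'a" where
  "weight s v e = (if is_loop U edge e then s * v e else v e)"

definition tutte_terms :: "(('v \<Rightarrow> 'v) \<times> ('v \<Rightarrow> 'e)) set" where
  "tutte_terms = (SIGMA p:{p. p permutes U}. PiE U (\<lambda>i. edges_between i (p i)))"

definition term_weight :: "'a::comm_ring_1 \<Rightarrow> ('e \<Rightarrow> 'a) \<Rightarrow> ('v \<Rightarrow> 'v) \<times> ('v \<Rightarrow> 'e) \<Rightarrow> 'a" where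
  "term_weight s v = (\<lambda>(p, \<phi>). \<Prod>i\<in>U. weight s v (\<phi> i))"

definition reverse_term :: "('v \<Rightarrow> 'v) \<times> ('v \<Rightarrow> 'e) \<Rightarrow> ('v \<Rightarrow> 'v) \<times> ('v \<Rightarrow> 'e)" where
  "reverse_term = (\<lambda>(p, \<phi>). (inv p, \<lambda>i\<in>U. \<phi> (inv p i)))"

definition matching_terms :: "(('v \<Rightarrow> 'v) \<times> ('v \<Rightarrow> 'e)) set" where
  "matching_terms = {(p, \<phi>) \<in> tutte_terms. \<forall>i\<in>U. \<phi> (p i) = \<phi> i}"

lemma tutte_eq_sum_weight: "tutte U E edge s v i j = sum (weight s v) (edges_between i j)"
proof (cases "i = j")
  case True
  then have "sum (weight s v) (edges_between i j) = (\<Sum>e\<in>edges_between i j. s * v e)"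
    by (intro sum.cong) (auto simp: weight_def is_loop_def edges_between_def)
  then show ?thesis by (simp add: tutte_def True edges_between_def sum_distrib_left)
next
  case False
  then have "sum (weight s v) (edges_between i j) = (\<Sum>e\<in>edges_between i j. v e)"
    by (intro sum.cong) (auto simp: weight_def is_loop_def edges_between_def)
  then show ?thesis by (simp add: tutte_def False edges_between_def)
qed

lemma mem_tutte_terms:
  "(p, \<phi>) \<in> tutte_terms \<longleftrightarrow>
    p permutes U \<and> \<phi> \<in> extensional U \<and> (\<forall>i\<in>U. \<phi> i \<in> E \<and> edge (\<phi> i) \<inter> U = {i, p i})"
  unfolding tutte_terms_def edges_between_def PiE_def Pi_def by auto

lemma finite_edges_between: "finite (edges_between i j)"
  unfolding edges_between_def using finite_E by simp

lemma finite_tutte_terms: "finite tutte_terms"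
  unfolding tutte_terms_def
  using finite_U by (intro finite_SigmaI finite_PiE) (auto simp: finite_permutations finite_edges_between)

lemma permanent_tutte_eq_sum_term_weight:
  "(\<Sum>p\<in>{p. p permutes U}. \<Prod>i\<in>U. tutte U E edge s v i (p i)) = sum (term_weight s v) tutte_terms"
proof -
  have "(\<Sum>p\<in>{p. p permutes U}. \<Prod>i\<in>U. tutte U E edge s v i (p i)) =
      (\<Sum>p\<in>{p. p permutes U}. \<Sum>\<phi>\<in>PiE U (\<lambda>i. edges_between i (p i)). term_weight s v (p, \<phi>))"
    using finite_U by (simp add: tutte_eq_sum_weight prod_sum_PiE term_weight_def finite_edges_between)
  also have "\<dots> = sum (term_weight s v) tutte_terms"
    unfolding tutte_terms_def
    by (subst sum.Sigma) (auto simp: finite_permutations finite_U finite_PiE finite_edges_between)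
  finally show ?thesis .
qed

lemma reverse_term_mem_tutte_terms:
  assumes "(p, \<phi>) \<in> tutte_terms"
  shows "reverse_term (p, \<phi>) \<in> tutte_terms"
proof -
  have p: "p permutes U" and \<phi>: "\<forall>i\<in>U. \<phi> i \<in> E \<and> edge (\<phi> i) \<inter> U = {i, p i}"
    using assms by (simp_all add: mem_tutte_terms)
  have "inv p i \<in> U" and "p (inv p i) = i" if "i \<in> U" for i
    using p that by (simp_all add: permutes_inverses permutes_in_image permutes_inv)
  then show ?thesis
    using p \<phi> by (auto simp: reverse_term_def mem_tutte_terms permutes_inv insert_commute)
qed

lemma reverse_term_reverse_term:
  assumes "(p, \<phi>) \<in> tutte_terms"
  shows "reverse_term (reverse_term (p, \<phi>)) = (p, \<phi>)"
proof -
  have p: "p permutes U" and "\<phi> \<in> extensional U" using assms by (simp_all add: mem_tutte_terms)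
  then have "(\<lambda>i\<in>U. \<phi> (inv p (p i))) = \<phi>"
    by (simp add: permutes_inverses(2)[OF p] extensional_restrict cong: restrict_cong)
  then show ?thesis using p by (simp add: reverse_term_def permutes_inv_inv permutes_in_image cong: restrict_cong)
qed

lemma term_weight_reverse_term:
  assumes "(p, \<phi>) \<in> tutte_terms"
  shows "term_weight s v (reverse_term (p, \<phi>)) = term_weight s v (p, \<phi>)"
proof -
  have "inv p permutes U" using assms by (simp add: mem_tutte_terms permutes_inv)
  then show ?thesis
    unfolding term_weight_def reverse_term_def
    using prod.permute[of "inv p" U "\<lambda>i. weight s v (\<phi> i)"] by simp
qed

lemma reverse_term_eq_self_iff:
  assumes "(p, \<phi>) \<in> tutte_terms"
  shows "reverse_term (p, \<phi>) = (p, \<phi>) \<longleftrightarrow> (\<forall>i\<in>U. \<phi> (p i) = \<phi> i)"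
proof
  assume "reverse_term (p, \<phi>) = (p, \<phi>)"
  then have "\<phi> (inv p j) = \<phi> j" if "j \<in> U" for j
    using that by (auto simp: reverse_term_def fun_eq_iff split: if_splits)
  moreover have "p permutes U" using assms by (simp add: mem_tutte_terms)
  ultimately show "\<forall>i\<in>U. \<phi> (p i) = \<phi> i" by (metis permutes_in_image permutes_inverses(2))
next
  assume fixed: "\<forall>i\<in>U. \<phi> (p i) = \<phi> i"
  have p: "p permutes U" and "\<phi> \<in> extensional U"
    and \<phi>: "\<forall>i\<in>U. edge (\<phi> i) \<inter> U = {i, p i}"
    using assms by (simp_all add: mem_tutte_terms)
  have "p (p i) = i" if "i \<in> U" for i
  proof -
    have "{p i, p (p i)} = {i, p i}"
      using \<phi> fixed that p by (metis permutes_in_image)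
    then show ?thesis by (metis doubleton_eq_iff)
  qed
  with p have "inv p = p" by (rule permutes_inv_eq_self)
  then show "reverse_term (p, \<phi>) = (p, \<phi>)"
    using fixed \<open>\<phi> \<in> extensional U\<close>
    by (simp add: reverse_term_def extensional_restrict cong: restrict_cong)
qed

lemma sum_term_weight_eq_sum_matching_terms:
  fixes s :: "'a::comm_ring_1"
  assumes "(1::'a) + 1 = 0"
  shows "sum (term_weight s v) tutte_terms = sum (term_weight s v) matching_terms"
proof -
  have "{x\<in>tutte_terms. reverse_term x = x} = matching_terms"
    unfolding matching_terms_def using reverse_term_eq_self_iff by auto
  moreover have "sum (term_weight s v) tutte_terms = sum (term_weight s v) {x\<in>tutte_terms. reverse_term x = x}"
    using assms finite_tutte_terms reverse_term_mem_tutte_terms reverse_term_reverse_term term_weight_reverse_term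
    by (intro sum_eq_sum_fixed_points_of_involution) auto
  ultimately show ?thesis by simp
qed

lemma mem_matching_terms:
  "(p, \<phi>) \<in> matching_terms \<longleftrightarrow> (p, \<phi>) \<in> tutte_terms \<and> (\<forall>i\<in>U. \<phi> (p i) = \<phi> i)"
  by (simp add: matching_terms_def)

lemma matching_term_constant_on_edge:
  assumes "(p, \<phi>) \<in> matching_terms" and "i \<in> U" and "j \<in> edge (\<phi> i) \<inter> U"
  shows "\<phi> j = \<phi> i"
proof -
  have "j = i \<or> j = p i" using assms by (auto simp: mem_matching_terms mem_tutte_terms)
  then show ?thesis using assms(1,2) by (auto simp: mem_matching_terms)
qed

lemma term_weight_matching_term:
  assumes "(p, \<phi>) \<in> matching_terms"
  shows "term_weight s v (p, \<phi>) = (\<Prod>e\<in>\<phi> ` U. if is_loop U edge e then s * v e else v e ^ 2)"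
proof -
  have "term_weight s v (p, \<phi>) = (\<Prod>i\<in>U. weight s v (\<phi> i))"
    by (simp add: term_weight_def)
  also have "\<dots> = (\<Prod>e\<in>\<phi> ` U. \<Prod>j\<in>{j\<in>U. \<phi> j = e}. weight s v (\<phi> j))"
    by (rule prod.image_gen[OF finite_U])
  also have "\<dots> = (\<Prod>e\<in>\<phi> ` U. if is_loop U edge e then s * v e else v e ^ 2)"
  proof (rule prod.cong[OF refl])
    fix e assume "e \<in> \<phi> ` U"
    then obtain i where i: "i \<in> U" and e: "e = \<phi> i" by blast
    have edge: "edge e \<inter> U = {i, p i}"
      using assms i e by (simp add: mem_matching_terms mem_tutte_terms)
    have fiber: "{j\<in>U. \<phi> j = e} = edge e \<inter> U"
    proof
      show "{j\<in>U. \<phi> j = e} \<subseteq> edge e \<inter> U" using assms by (auto simp: mem_matching_terms mem_tutte_terms)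
      show "edge e \<inter> U \<subseteq> {j\<in>U. \<phi> j = e}" using matching_term_constant_on_edge[OF assms i] e by auto
    qed
    have "(\<Prod>j\<in>{j\<in>U. \<phi> j = e}. weight s v (\<phi> j)) = (\<Prod>j\<in>{j\<in>U. \<phi> j = e}. weight s v e)"
      by (rule prod.cong) simp_all
    also have "\<dots> = weight s v e ^ card (edge e \<inter> U)"
      unfolding fiber by (rule prod_constant)
    also have "\<dots> = (if is_loop U edge e then s * v e else v e ^ 2)"
      using edge by (cases "p i = i") (simp_all add: weight_def is_loop_def power2_eq_square)
    finally show "(\<Prod>j\<in>{j\<in>U. \<phi> j = e}. weight s v (\<phi> j)) = \<dots>" .
  qed
  finally show ?thesis .
qed

lemma perfect_matching_image_matching_term:
  assumes "(p, \<phi>) \<in> matching_terms"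
  shows "perfect_matching U E edge (\<phi> ` U)"
proof -
  have \<phi>: "\<phi> i \<in> E" "i \<in> edge (\<phi> i)" if "i \<in> U" for i
    using assms that by (auto simp: mem_matching_terms mem_tutte_terms)
  have "\<phi> i = \<phi> j" if "i \<in> U" "j \<in> U" "x \<in> edge (\<phi> i) \<inter> edge (\<phi> j) \<inter> U" for i j x
    using matching_term_constant_on_edge[OF assms] that by (metis IntD1 IntD2 Int_iff)
  then show ?thesis
    unfolding perfect_matching_def using \<phi> by blast
qed

lemma inj_on_image_matching_terms: "inj_on (\<lambda>(p, \<phi>). \<phi> ` U) matching_terms"
proof (intro inj_onI, clarify)
  fix p \<phi> q \<psi>
  assume pm: "(p, \<phi>) \<in> matching_terms" and qm: "(q, \<psi>) \<in> matching_terms" and img: "\<phi> ` U = \<psi> ` U"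
  have p: "p permutes U" "\<phi> \<in> extensional U" "\<forall>i\<in>U. edge (\<phi> i) \<inter> U = {i, p i}"
    and q: "q permutes U" "\<psi> \<in> extensional U" "\<forall>i\<in>U. edge (\<psi> i) \<inter> U = {i, q i}"
    using pm qm by (simp_all add: mem_matching_terms mem_tutte_terms)
  have "\<phi> i = \<psi> i" if i: "i \<in> U" for i
  proof -
    obtain j where j: "j \<in> U" "\<phi> i = \<psi> j" using img i by blast
    moreover have "i \<in> edge (\<phi> i) \<inter> U" using i p(3) by auto
    ultimately have "i \<in> edge (\<psi> j) \<inter> U" by simp
    then show ?thesis using matching_term_constant_on_edge[OF qm j(1)] j(2) by simp
  qed
  with p(2) q(2) have "\<phi> = \<psi>" by (rule extensionalityI)
  moreover have "p = q"
  proof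
    fix i show "p i = q i"
      using p q \<open>\<phi> = \<psi>\<close> by (cases "i \<in> U") (metis doubleton_eq_iff, simp add: permutes_not_in)
  qed
  ultimately show "p = q \<and> \<phi> = \<psi>" by simp
qed

lemma matching_term_of_perfect_matching:
  assumes le2: "\<forall>e\<in>E. card (edge e \<inter> U) \<le> 2" and M: "perfect_matching U E edge M"
  obtains p \<phi> where "(p, \<phi>) \<in> matching_terms" and "\<phi> ` U = M"
proof -
  define \<phi> where "\<phi> = (\<lambda>i\<in>U. THE e. e \<in> M \<and> i \<in> edge e)"
  have \<phi>M: "\<phi> i \<in> M" "i \<in> edge (\<phi> i)" if "i \<in> U" for i
    using theI'[OF perfect_matching_unique_edge[OF M that]] that by (simp_all add: \<phi>_def)
  have \<phi>_eq: "\<phi> i = e" if "i \<in> U" "e \<in> M" "i \<in> edge e" for i e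
    using perfect_matching_unique_edge[OF M that(1)] \<phi>M[OF that(1)] that(2,3) by blast
  have ME: "M \<subseteq> E" using M by (simp add: perfect_matching_def)
  have "\<exists>j. edge (\<phi> i) \<inter> U = {i, j}" if "i \<in> U" for i
    using finite_U le2 \<phi>M[OF that] ME that by (intro card_le_2_imp_doubleton) auto
  then obtain q where q: "edge (\<phi> i) \<inter> U = {i, q i}" if "i \<in> U" for i by metis
  define p where "p i = (if i \<in> U then q i else i)" for i
  have edge: "edge (\<phi> i) \<inter> U = {i, p i}" and pU: "p i \<in> U" if "i \<in> U" for i
    using q[OF that] that by (auto simp: p_def)
  have \<phi>p: "\<phi> (p i) = \<phi> i" if "i \<in> U" for i
    using \<phi>_eq[OF pU[OF that] \<phi>M(1)[OF that]] edge[OF that] by blast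
  have "p (p i) = i" if "i \<in> U" for i
    using edge[OF pU[OF that]] edge[OF that] \<phi>p[OF that] by (metis doubleton_eq_iff)
  then have "bij_betw p U U" using pU by (intro bij_betw_byWitness[where f' = p]) auto
  then have "p permutes U" by (rule bij_imp_permutes) (simp add: p_def)
  moreover have "\<phi> \<in> extensional U" by (simp add: \<phi>_def)
  ultimately have "(p, \<phi>) \<in> matching_terms"
    using \<phi>M(1) ME edge \<phi>p by (auto simp: mem_matching_terms mem_tutte_terms)
  moreover have "\<phi> ` U = M"
  proof
    show "\<phi> ` U \<subseteq> M" using \<phi>M by blast
    show "M \<subseteq> \<phi> ` U"
    proof
      fix e assume "e \<in> M"
      moreover obtain i where "i \<in> edge e \<inter> U" using M \<open>e \<in> M\<close> unfolding perfect_matching_def by blast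
      ultimately show "e \<in> \<phi> ` U" using \<phi>_eq by blast
    qed
  qed
  ultimately show ?thesis by (rule that)
qed

lemma bij_betw_matching_terms_perfect_matchings:
  assumes "\<forall>e\<in>E. card (edge e \<inter> U) \<le> 2"
  shows "bij_betw (\<lambda>(p, \<phi>). \<phi> ` U) matching_terms {M. perfect_matching U E edge M}"
  unfolding bij_betw_def
proof
  show "inj_on (\<lambda>(p, \<phi>). \<phi> ` U) matching_terms" by (rule inj_on_image_matching_terms)
  show "(\<lambda>(p, \<phi>). \<phi> ` U) ` matching_terms = {M. perfect_matching U E edge M}"
  proof (intro equalityI subsetI)
    fix M assume "M \<in> (\<lambda>(p, \<phi>). \<phi> ` U) ` matching_terms"
    then show "M \<in> {M. perfect_matching U E edge M}"
      using perfect_matching_image_matching_term by auto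
  next
    fix M assume "M \<in> {M. perfect_matching U E edge M}"
    then obtain p \<phi> where "(p, \<phi>) \<in> matching_terms" and "\<phi> ` U = M"
      using matching_term_of_perfect_matching[OF assms] by blast
    then show "M \<in> (\<lambda>(p, \<phi>). \<phi> ` U) ` matching_terms" by force
  qed
qed

theorem det_tutte_eq_sum_perfect_matchings:
  fixes s :: "'a::comm_ring_1"
  assumes "(1::'a) + 1 = 0" and "\<forall>e\<in>E. card (edge e \<inter> U) \<le> 2"
  shows "det_on U (tutte U E edge s v) =
    (\<Sum>M\<in>{M. perfect_matching U E edge M}.
       s ^ card {e\<in>M. is_loop U edge e} * (\<Prod>e\<in>M. v e ^ (if is_loop U edge e then 1 else 2)))"
proof -
  define F where "F M = (\<Prod>e\<in>M. if is_loop U edge e then s * v e else v e ^ 2)" for M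
  have "det_on U (tutte U E edge s v) = sum (term_weight s v) matching_terms"
    using assms(1)
    by (simp add: det_on_eq_permanent_if_one_add_one_eq_zero permanent_tutte_eq_sum_term_weight
        sum_term_weight_eq_sum_matching_terms)
  also have "\<dots> = (\<Sum>x\<in>matching_terms. F ((\<lambda>(p, \<phi>). \<phi> ` U) x))"
    by (intro sum.cong) (auto simp: F_def term_weight_matching_term)
  also have "\<dots> = sum F {M. perfect_matching U E edge M}"
    by (rule sum.reindex_bij_betw[OF bij_betw_matching_terms_perfect_matchings[OF assms(2)]])
  also have "\<dots> = (\<Sum>M\<in>{M. perfect_matching U E edge M}.
       s ^ card {e\<in>M. is_loop U edge e} * (\<Prod>e\<in>M. v e ^ (if is_loop U edge e then 1 else 2)))"
  proof (intro sum.cong refl)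
    fix M assume "M \<in> {M. perfect_matching U E edge M}"
    then have "finite M" using finite_E by (auto simp: perfect_matching_def intro: finite_subset)
    then show "F M = s ^ card {e\<in>M. is_loop U edge e} * (\<Prod>e\<in>M. v e ^ (if is_loop U edge e then 1 else 2))"
      unfolding F_def by (rule prod_if_eq_power_card_mult_prod)
  qed
  finally show ?thesis .
qed

end

theorem lemma4p2:
  fixes V :: "'v set" and E :: "'e set" and edge :: "'e \<Rightarrow> 'v set" and U :: "'v set"
    and k m :: nat
  assumes "k_uniform k V E edge"
    and "U \<subseteq> V"
    and "\<forall>e\<in>E. card (edge e \<inter> U) \<le> 2"
    and "m \<ge> 1"
    and "card (UNIV :: 'k::{field,finite} set) = 2 ^ m"
  shows "det_on U (tutte U E edge (pvar SVar :: ('e tvar, 'k) mpoly) (\<lambda>e. pvar (EVar e))) =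
    (\<Sum>M\<in>{M. perfect_matching U E edge M}.
       pvar SVar ^ card {e\<in>M. is_loop U edge e} *
       (\<Prod>e\<in>M. pvar (EVar e) ^ (if is_loop U edge e then 1 else 2)))"
proof -
  have "finite V" and "finite E" using assms(1) by (simp_all add: k_uniform_def)
  then interpret finite_projection U E edge
    using assms(2) by unfold_locales (auto intro: finite_subset)
  have "(1::'k) + 1 = 0" using assms(4,5) by (intro one_add_one_eq_zero_if_card_eq_power_of_two)
  then have "(1::('e tvar, 'k) mpoly) + 1 = 0" by (rule poly_mapping_one_add_one_eq_zero)
  then show ?thesis using assms(3) by (rule det_tutte_eq_sum_perfect_matchings)
qed

end
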